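(* Let $N\ge1$ and let $\{x_j\}_{j=0}^N$ be the Legendre–Gauss–Radau points (the zeros of $P_N(x)+P_{N+1}(x)$, with $x_0=-1$), with weights $\omega_j=\frac{1}{(N+1)^2}\frac{1-x_j}{P_N^2(x_j)}$. Let $B_0,\dots,B_N\in\mathbb{P}_N$ be defined by $B_0(-1)=1$, $B_0'(x_i)=0$ ($1\le i\le N$), and $B_j(-1)=0$, $B_j'(x_i)=\delta_{ij}$ ($1\le i,j\le N$). Then $B_0(x)=1$ and $$B_j(x)=\sum_{k=0}^{N-1}\alpha_{kj}\frac{\partial_x^{-1}P_k(x)}{\gamma_k},\qquad \alpha_{kj}=\big(P_k(x_j)-(-1)^{N+k}P_N(x_j)\big)\omega_j,\quad 1\le j\le N,$$ where $\gamma_k=\frac{2}{2k+1}$.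
   Context: $P_k$ is the Legendre polynomial of degree $k$; $\partial_x^{-1}u(x)=\int_{-1}^xu(t)\,dt$. $\mathbb{P}_N$ is the space of polynomials of degree at most $N$. *)

theory Defs
  imports "HOL-Analysis.Analysis" "HOL-Computational_Algebra.Polynomial"
begin

fun legendre :: "nat \<Rightarrow> real poly" where
  "legendre 0 = 1"
| "legendre (Suc 0) = [:0, 1:]"
| "legendre (Suc (Suc n)) =
     smult (1 / real (n + 2))
       (smult (real (2 * n + 3)) ([:0, 1:] * legendre (Suc n)) - smult (real (n + 1)) (legendre n))"

definition antideriv :: "(real \<Rightarrow> real) \<Rightarrow> real \<Rightarrow> real" where
  "antideriv u t = integral {-1..t} u"

definition lgr_gamma :: "nat \<Rightarrow> real" where
  "lgr_gamma k = 2 / (2 * real k + 1)"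

definition lgr_weight :: "nat \<Rightarrow> real \<Rightarrow> real" where
  "lgr_weight N t = (1 / (real N + 1)^2) * (1 - t) / (poly (legendre N) t)^2"

end

theory Submission
  imports Defs
begin

text \<open>
  The derivatives of the \<open>B j\<close> have degree below \<open>N\<close> and are prescribed at the \<open>N\<close> distinct
  interior Radau nodes, which determines them. So \<open>B 0\<close> has zero derivative and is constant,
  and for \<open>j \<ge> 1\<close> it suffices that \<open>q\<^sub>j = \<Sum>\<^sub>k \<alpha>\<^sub>k\<^sub>j P\<^sub>k / \<gamma>\<^sub>k\<close> takes the values
  \<open>\<delta>\<^sub>i\<^sub>j\<close> at the nodes; \<open>B j\<close> is then the antiderivative of \<open>q\<^sub>j\<close> vanishing at \<open>-1\<close>.
  In terms of the Christoffel--Darboux kernel \<open>K\<^sub>N(u,v) = \<Sum>\<^sub>k\<^sub><\<^sub>N P\<^sub>k(u) P\<^sub>k(v) / \<gamma>\<^sub>k\<close>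
  one has \<open>q\<^sub>j(y) = \<omega>\<^sub>j (K\<^sub>N(x\<^sub>j,y) - (-1)\<^sup>N P\<^sub>N(x\<^sub>j) K\<^sub>N(-1,y))\<close>. The Christoffel--Darboux
  formula together with the Radau condition \<open>P\<^sub>N\<^sub>+\<^sub>1 = -P\<^sub>N\<close> at the nodes evaluates both kernel
  terms in closed form: off the diagonal they cancel, on the diagonal they add up to \<open>1 / \<omega>\<^sub>j\<close>.
\<close>

declare legendre.simps(3) [simp del]

abbreviation Leg :: "nat \<Rightarrow> real \<Rightarrow> real" where
  "Leg n \<equiv> poly (legendre n)"

abbreviation Leg' :: "nat \<Rightarrow> real \<Rightarrow> real" where
  "Leg' n \<equiv> poly (pderiv (legendre n))"

lemma Leg_Suc_Suc:
  "real (n + 2) * Leg (Suc (Suc n)) t = real (2 * n + 3) * t * Leg (Suc n) t - real (n + 1) * Leg n t"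
  by (simp add: legendre.simps(3) field_simps)

lemma Leg'_Suc_Suc:
  "real (n + 2) * Leg' (Suc (Suc n)) t
     = real (2 * n + 3) * (Leg (Suc n) t + t * Leg' (Suc n) t) - real (n + 1) * Leg' n t"
  by (simp add: legendre.simps(3) pderiv_smult pderiv_diff pderiv_mult pderiv_pCons field_simps)

lemma Leg_one: "Leg n 1 = 1"
  by (induction n rule: legendre.induct) (simp_all add: legendre.simps(3) field_simps)

lemma Leg_minus_one: "Leg n (-1) = (-1) ^ n"
  by (induction n rule: legendre.induct) (simp_all add: legendre.simps(3) field_simps)

lemma degree_legendre_le: "degree (legendre n) \<le> n"
proof (induction n rule: legendre.induct)
  case (3 n)
  have "degree ([:0, 1:] * legendre (Suc n)) \<le> Suc (Suc n)"
    using degree_mult_le[of "[:0, 1:]" "legendre (Suc n)"] 3 by simp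
  with 3 show ?case
    unfolding legendre.simps(3)
    by (intro order.trans[OF degree_smult_le] degree_diff_le order.trans[OF degree_smult_le]) auto
qed simp_all

lemma Leg_Suc_nonzero_if_Leg_zero:
  assumes "Leg n t = 0" shows "Leg (Suc n) t \<noteq> 0"
  using assms
proof (induction n)
  case (Suc n)
  show ?case
  proof
    assume "Leg (Suc (Suc n)) t = 0"
    with Suc.prems Leg_Suc_Suc[of n t] have "Leg n t = 0" by simp
    with Suc show False by blast
  qed
qed simp

lemma first_order_identity_from_recurrences:
  fixes t c p p' d d' :: real
  assumes "d' = t * d + c * p" and "t * d' - d = c * p'"
  shows "(1 - t\<^sup>2) * d' = c * (p - t * p')"
proof -
  have "d' = t * (t * d' - c * p') + c * p"
    using assms by simp
  then show ?thesis by (simp add: algebra_simps power2_eq_square)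
qed

text \<open>The two derivative recurrences are proved simultaneously; each needs the other at the
  previous index.\<close>

lemma Leg'_Suc:
  "Leg' (Suc n) t = t * Leg' n t + real (Suc n) * Leg n t \<and>
   t * Leg' (Suc n) t - Leg' n t = real (Suc n) * Leg (Suc n) t"
proof (induction n)
  case 0
  then show ?case by (simp add: pderiv_pCons)
next
  case (Suc n)
  then have lowered: "Leg' n t = t * Leg' (Suc n) t - real (Suc n) * Leg (Suc n) t"
    and ode: "(1 - t\<^sup>2) * Leg' (Suc n) t = real (Suc n) * (Leg n t - t * Leg (Suc n) t)"
    using first_order_identity_from_recurrences by auto
  have "real (n + 2) * Leg' (Suc (Suc n)) t
      = real (n + 2) * (t * Leg' (Suc n) t + real (Suc (Suc n)) * Leg (Suc n) t)"
    using Leg'_Suc_Suc[of n t] unfolding lowered by (simp add: algebra_simps)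
  then have first: "Leg' (Suc (Suc n)) t = t * Leg' (Suc n) t + real (Suc (Suc n)) * Leg (Suc n) t"
    by simp
  have "t * Leg' (Suc (Suc n)) t - Leg' (Suc n) t
      = real (n + 2) * t * Leg (Suc n) t - (1 - t\<^sup>2) * Leg' (Suc n) t"
    unfolding first by (simp add: algebra_simps power2_eq_square)
  also have "\<dots> = real (2 * n + 3) * t * Leg (Suc n) t - real (n + 1) * Leg n t"
    unfolding ode by (simp add: algebra_simps)
  also have "\<dots> = real (Suc (Suc n)) * Leg (Suc (Suc n)) t"
    using Leg_Suc_Suc[of n t] by simp
  finally show ?case using first by simp
qed

lemma Leg_first_order_identity:
  "(1 - t\<^sup>2) * Leg' (Suc n) t = real (Suc n) * (Leg n t - t * Leg (Suc n) t)"
  using Leg'_Suc by (blast intro: first_order_identity_from_recurrences)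

definition legendre_kernel :: "nat \<Rightarrow> real \<Rightarrow> real \<Rightarrow> real" where
  "legendre_kernel n u v = (\<Sum>k<n. Leg k u * Leg k v / lgr_gamma k)"

lemma legendre_kernel_Suc:
  "legendre_kernel (Suc n) u v = legendre_kernel n u v + (2 * real n + 1) / 2 * Leg n u * Leg n v"
  by (simp add: legendre_kernel_def lgr_gamma_def)

lemma legendre_kernel_christoffel_darboux:
  "(u - v) * legendre_kernel (Suc n) u v
     = real (Suc n) / 2 * (Leg (Suc n) u * Leg n v - Leg n u * Leg (Suc n) v)"
proof (induction n)
  case 0
  then show ?case by (simp add: legendre_kernel_def lgr_gamma_def field_simps)
next
  case (Suc n)
  have "(u - v) * legendre_kernel (Suc (Suc n)) u v
      = real (Suc n) / 2 * (Leg (Suc n) u * Leg n v - Leg n u * Leg (Suc n) v)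
        + (u - v) * ((2 * real (Suc n) + 1) / 2 * Leg (Suc n) u * Leg (Suc n) v)"
    by (subst legendre_kernel_Suc) (simp add: distrib_left Suc.IH)
  also have "\<dots> = 1 / 2 * ((real (n + 2) * Leg (Suc (Suc n)) u) * Leg (Suc n) v
                          - Leg (Suc n) u * (real (n + 2) * Leg (Suc (Suc n)) v))"
    unfolding Leg_Suc_Suc by (simp add: field_simps)
  finally show ?case by (simp add: field_simps)
qed

lemma legendre_kernel_diagonal:
  "legendre_kernel (Suc n) u u
     = real (Suc n) / 2 * (Leg' (Suc n) u * Leg n u - Leg' n u * Leg (Suc n) u)"
proof (induction n)
  case 0
  then show ?case by (simp add: legendre_kernel_def lgr_gamma_def field_simps pderiv_pCons)
next
  case (Suc n)
  have "legendre_kernel (Suc (Suc n)) u u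
      = real (Suc n) / 2 * (Leg' (Suc n) u * Leg n u - Leg' n u * Leg (Suc n) u)
        + (2 * real (Suc n) + 1) / 2 * Leg (Suc n) u * Leg (Suc n) u"
    by (subst legendre_kernel_Suc) (simp add: Suc.IH)
  also have "\<dots> = 1 / 2 * ((real (n + 2) * Leg' (Suc (Suc n)) u) * Leg (Suc n) u
                          - Leg' (Suc n) u * (real (n + 2) * Leg (Suc (Suc n)) u))"
    unfolding Leg_Suc_Suc Leg'_Suc_Suc by (simp add: field_simps)
  finally show ?case by (simp add: field_simps)
qed

lemma radau_root_ne_one: "Leg N a + Leg (Suc N) a = 0 \<Longrightarrow> a \<noteq> 1"
  by (auto simp: Leg_one)

lemma radau_root_Leg_nonzero: "Leg N a + Leg (Suc N) a = 0 \<Longrightarrow> Leg N a \<noteq> 0"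
  using Leg_Suc_nonzero_if_Leg_zero by fastforce

lemma radau_root_Leg_pred:
  assumes "Leg (Suc m) a + Leg (Suc (Suc m)) a = 0"
  shows "real (Suc m) * Leg m a = ((2 * real (Suc m) + 1) * a + real (Suc m) + 1) * Leg (Suc m) a"
proof -
  have "Leg (Suc (Suc m)) a = - Leg (Suc m) a"
    using assms by simp
  with Leg_Suc_Suc[of m a] show ?thesis by (simp add: algebra_simps)
qed

lemma radau_root_Leg':
  assumes root: "Leg (Suc m) a + Leg (Suc (Suc m)) a = 0" and "a \<noteq> -1"
  shows "(1 - a) * Leg' (Suc m) a = (real (Suc m) + 1) * Leg (Suc m) a"
proof -
  have "(1 + a) * ((1 - a) * Leg' (Suc m) a) = (1 - a\<^sup>2) * Leg' (Suc m) a"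
    by (simp add: algebra_simps power2_eq_square)
  also have "\<dots> = real (Suc m) * Leg m a - real (Suc m) * a * Leg (Suc m) a"
    unfolding Leg_first_order_identity
    by (simp add: algebra_simps)
  also have "\<dots> = (1 + a) * ((real (Suc m) + 1) * Leg (Suc m) a)"
    unfolding radau_root_Leg_pred[OF root] by (simp add: algebra_simps)
  finally show ?thesis
    using \<open>a \<noteq> -1\<close> by (simp add: add_eq_0_iff)
qed

lemma legendre_kernel_minus_one_radau_root:
  assumes "0 < N" and root: "Leg N a + Leg (Suc N) a = 0" and "a \<noteq> -1"
  shows "legendre_kernel N (-1) a = - ((-1) ^ N * (2 * real N + 1) / 2 * Leg N a)"
proof -
  obtain m where N: "N = Suc m" using \<open>0 < N\<close> gr0_implies_Suc by blast
  have "(-1 - a) * legendre_kernel N (-1) a = (-1) ^ N / 2 * (real N * Leg m a + real N * Leg N a)"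
    unfolding N legendre_kernel_christoffel_darboux Leg_minus_one by (simp add: field_simps)
  also have "\<dots> = (-1 - a) * - ((-1) ^ N * (2 * real N + 1) / 2 * Leg N a)"
    using radau_root_Leg_pred[of m a] root unfolding N by (simp add: field_simps)
  finally show ?thesis
    using \<open>a \<noteq> -1\<close> by (subst (asm) mult_left_cancel) auto
qed

lemma legendre_kernel_distinct_radau_roots:
  assumes "0 < N" and root_a: "Leg N a + Leg (Suc N) a = 0" and root_b: "Leg N b + Leg (Suc N) b = 0"
    and "a \<noteq> b"
  shows "legendre_kernel N b a = - ((2 * real N + 1) / 2 * Leg N a * Leg N b)"
proof -
  obtain m where N: "N = Suc m" using \<open>0 < N\<close> gr0_implies_Suc by blast
  have "(b - a) * legendre_kernel N b a = 1 / 2 * (Leg N b * (real N * Leg m a) - (real N * Leg m b) * Leg N a)"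
    unfolding N legendre_kernel_christoffel_darboux by (simp add: field_simps)
  also have "\<dots> = (b - a) * - ((2 * real N + 1) / 2 * Leg N a * Leg N b)"
    using radau_root_Leg_pred[of m a] radau_root_Leg_pred[of m b] root_a root_b
    unfolding N by (simp add: field_simps)
  finally show ?thesis
    using \<open>a \<noteq> b\<close> by (subst (asm) mult_left_cancel) auto
qed

lemma legendre_kernel_diagonal_radau_root:
  assumes "0 < N" and root: "Leg N a + Leg (Suc N) a = 0" and "a \<noteq> -1"
  shows "legendre_kernel N a a + (2 * real N + 1) / 2 * (Leg N a)\<^sup>2 = 1 / lgr_weight N a"
proof -
  obtain m where N: "N = Suc m" using \<open>0 < N\<close> gr0_implies_Suc by blast
  have "a \<noteq> 1" "Leg N a \<noteq> 0"
    using radau_root_ne_one radau_root_Leg_nonzero root by blast+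
  have Leg'_pred: "Leg' m a = a * Leg' N a - real N * Leg N a"
    using conjunct2[OF Leg'_Suc[of m a]] unfolding N by simp
  have Leg': "Leg' N a = (real N + 1) * Leg N a / (1 - a)"
    using radau_root_Leg'[of m a] root \<open>a \<noteq> -1\<close> \<open>a \<noteq> 1\<close> unfolding N by (simp add: field_simps)
  have Leg_pred: "real N * Leg m a - real N * a * Leg N a = (real N + 1) * (1 + a) * Leg N a"
    using radau_root_Leg_pred[of m a] root unfolding N by (simp add: algebra_simps)
  have "legendre_kernel N a a
      = real N / 2 * (Leg' N a * Leg m a - Leg' m a * Leg N a)"
    unfolding N legendre_kernel_diagonal ..
  also have "\<dots> = Leg' N a * (real N * Leg m a - real N * a * Leg N a) / 2 + (real N)\<^sup>2 / 2 * (Leg N a)\<^sup>2"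
    unfolding Leg'_pred by (simp add: field_simps power2_eq_square)
  also have "\<dots> = (real N + 1)\<^sup>2 * (1 + a) / (2 * (1 - a)) * (Leg N a)\<^sup>2 + (real N)\<^sup>2 / 2 * (Leg N a)\<^sup>2"
    using \<open>a \<noteq> 1\<close> unfolding Leg_pred Leg' by (simp add: field_simps power2_eq_square)
  finally show ?thesis
    using \<open>a \<noteq> 1\<close> \<open>Leg N a \<noteq> 0\<close> by (simp add: lgr_weight_def field_simps power2_eq_square)
qed

text \<open>For \<open>b = x\<^sub>j\<close> the coefficients are the \<open>\<alpha>\<^sub>k\<^sub>j / \<gamma>\<^sub>k\<close> of the proposition.\<close>

definition radau_cardinal_deriv :: "nat \<Rightarrow> real \<Rightarrow> real poly" where
  "radau_cardinal_deriv N b =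
     (\<Sum>k<N. smult ((Leg k b - (-1) ^ (N + k) * Leg N b) * lgr_weight N b / lgr_gamma k) (legendre k))"

lemma poly_radau_cardinal_deriv:
  "poly (radau_cardinal_deriv N b) y
     = lgr_weight N b * (legendre_kernel N b y - (-1) ^ N * Leg N b * legendre_kernel N (-1) y)"
proof -
  have "poly (radau_cardinal_deriv N b) y
      = (\<Sum>k<N. lgr_weight N b * (Leg k b * Leg k y / lgr_gamma k)
               - lgr_weight N b * ((-1) ^ N * Leg N b) * (Leg k (-1) * Leg k y / lgr_gamma k))"
    unfolding radau_cardinal_deriv_def poly_sum
    by (intro sum.cong) (simp_all add: Leg_minus_one power_add diff_divide_distrib algebra_simps)
  then show ?thesis
    by (simp only: legendre_kernel_def sum_subtractf sum_distrib_left right_diff_distrib mult.assoc)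
qed

lemma degree_radau_cardinal_deriv: "0 < N \<Longrightarrow> degree (radau_cardinal_deriv N b) < N"
  unfolding radau_cardinal_deriv_def
  by (rule le_less_trans[OF degree_sum_le[where n = "N - 1"]])
     (auto intro: order.trans[OF degree_smult_le] order.trans[OF degree_legendre_le])

lemma radau_cardinal_deriv_at_radau_root:
  assumes "0 < N"
    and root_a: "Leg N a + Leg (Suc N) a = 0" and "a \<noteq> -1"
    and root_b: "Leg N b + Leg (Suc N) b = 0" and "b \<noteq> -1"
  shows "poly (radau_cardinal_deriv N b) a = (if a = b then 1 else 0)"
proof -
  have sign: "(-1::real) ^ N * (-1) ^ N = 1"
    by (simp flip: power_mult_distrib)
  have minus_one: "(-1) ^ N * Leg N b * legendre_kernel N (-1) a = - ((2 * real N + 1) / 2 * Leg N a * Leg N b)"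
    using legendre_kernel_minus_one_radau_root[OF assms(1-3)] sign by (simp add: algebra_simps)
  show ?thesis
  proof (cases "a = b")
    case True
    have "lgr_weight N a \<noteq> 0"
      using radau_root_ne_one[OF root_a] radau_root_Leg_nonzero[OF root_a] \<open>a \<noteq> -1\<close>
      by (simp add: lgr_weight_def)
    moreover have "poly (radau_cardinal_deriv N a) a
        = lgr_weight N a * (legendre_kernel N a a + (2 * real N + 1) / 2 * (Leg N a)\<^sup>2)"
      using minus_one True by (simp add: poly_radau_cardinal_deriv power2_eq_square)
    ultimately show ?thesis
      using True legendre_kernel_diagonal_radau_root[OF assms(1-3)] by simp
  next
    case False
    then show ?thesis
      using legendre_kernel_distinct_radau_roots[OF \<open>0 < N\<close> root_a root_b] minus_one
      by (simp add: poly_radau_cardinal_deriv)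
  qed
qed

lemma poly_eq_antideriv_pderiv:
  fixes p :: "real poly"
  assumes "-1 \<le> t"
  shows "poly p t = poly p (-1) + antideriv (poly (pderiv p)) t"
proof -
  have "(poly (pderiv p) has_integral poly p t - poly p (-1)) {-1..t}"
    by (rule fundamental_theorem_of_calculus[OF assms])
       (auto simp: has_real_derivative_iff_has_vector_derivative[symmetric]
             intro: has_field_derivative_at_within)
  then show ?thesis
    unfolding antideriv_def by (simp add: integral_unique)
qed

lemma antideriv_poly_sum_smult:
  fixes p :: "'a \<Rightarrow> real poly"
  assumes "finite A"
  shows "antideriv (poly (\<Sum>k\<in>A. smult (c k) (p k))) t = (\<Sum>k\<in>A. c k * antideriv (poly (p k)) t)"
  unfolding antideriv_def poly_sum poly_smult
  by (subst integral_sum)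
     (auto simp: assms intro!: integrable_continuous_interval continuous_intros)

lemma poly_eq_if_agree_on_inj_nodes:
  fixes p q :: "'a :: {comm_ring_1, ring_no_zero_divisors} poly"
  assumes "inj_on x I" and "degree p < card I" and "degree q < card I"
    and "\<forall>i\<in>I. poly p (x i) = poly q (x i)"
  shows "p = q"
  using assms by (intro poly_eqI_degree[where A = "x ` I"]) (auto simp: card_image)

lemma pderiv_eq_0_imp_const:
  fixes p :: "real poly"
  assumes "pderiv p = 0"
  shows "p = [:poly p a:]"
proof -
  obtain c where "p = [:c:]"
    using assms degree_eq_zeroE by (auto simp: pderiv_eq_0_iff)
  then show ?thesis by simp
qed

theorem proposition4p3:
  fixes N :: nat and x :: "nat \<Rightarrow> real" and B :: "nat \<Rightarrow> real poly"
  assumes N1: "N \<ge> 1"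
    and x_inj: "inj_on x {0..N}"
    and x_roots: "x ` {0..N} = {t. poly (legendre N + legendre (Suc N)) t = 0}"
    and x0: "x 0 = -1"
    and B_deg: "\<forall>j\<in>{0..N}. degree (B j) \<le> N"
    and B0_left: "poly (B 0) (-1) = 1"
    and B0_der: "\<forall>i\<in>{1..N}. poly (pderiv (B 0)) (x i) = 0"
    and Bj_left: "\<forall>j\<in>{1..N}. poly (B j) (-1) = 0"
    and Bj_der: "\<forall>i\<in>{1..N}. \<forall>j\<in>{1..N}.
                   poly (pderiv (B j)) (x i) = (if i = j then 1 else 0)"
  shows "B 0 = 1 \<and>
    (\<forall>j\<in>{1..N}. \<forall>t\<in>{-1..1}.
       poly (B j) t =
         (\<Sum>k<N. ((poly (legendre k) (x j) - (-1) ^ (N + k) * poly (legendre N) (x j))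
                     * lgr_weight N (x j))
                  * antideriv (poly (legendre k)) t / lgr_gamma k))"
proof -
  have root: "Leg N (x i) + Leg (Suc N) (x i) = 0" if "i \<in> {1..N}" for i
    using that x_roots by (fastforce simp: set_eq_iff)
  have interior: "x i \<noteq> -1" if "i \<in> {1..N}" for i
    using that x0 inj_onD[OF x_inj, of i 0] by fastforce
  have nodes_inj: "inj_on x {1..N}"
    using x_inj by (rule inj_on_subset) auto
  have degree_pderiv_B: "degree (pderiv (B j)) < N" if "j \<in> {0..N}" for j
    using B_deg that N1 unfolding degree_pderiv by fastforce
  have "pderiv (B 0) = 0"
    using B0_der degree_pderiv_B[of 0] N1
    by (intro poly_eq_if_agree_on_inj_nodes[OF nodes_inj]) auto
  then have B0: "B 0 = 1"
    using B0_left pderiv_eq_0_imp_const[of "B 0" "-1"] by (simp add: one_pCons)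
  have "pderiv (B j) = radau_cardinal_deriv N (x j)" if "j \<in> {1..N}" for j
    using that N1 Bj_der root interior inj_on_eq_iff[OF nodes_inj]
      degree_pderiv_B[of j] degree_radau_cardinal_deriv[of N "x j"]
    by (intro poly_eq_if_agree_on_inj_nodes[OF nodes_inj])
       (auto simp: radau_cardinal_deriv_at_radau_root)
  then have "poly (B j) t = antideriv (poly (radau_cardinal_deriv N (x j))) t"
    if "j \<in> {1..N}" "t \<in> {-1..1}" for j t
    using that Bj_left poly_eq_antideriv_pderiv[of t "B j"] by simp
  then show ?thesis
    using B0 by (simp add: radau_cardinal_deriv_def antideriv_poly_sum_smult)
qed

end
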